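(* Let $G$ be a finite abelian group and let $B\subset G$ be an irreducible balanced set. Then there exists $g\in -B$ such that $\Sigma(B+g)=\langle B+g\rangle$. That is, $B+g$ is an additive basis for the subgroup generated by $B+g$.
   Context: A set $B\subset G$ is balanced if for every $b\in B$ there exist distinct $b_1,b_2\in B$ with $2b=b_1+b_2$. A balanced set $B$ is irreducible if it does not contain two disjoint balanced subsets. For a finite set $S$, $\Sigma(S)=\{\sum_{s\in S'}s:S'\subseteq S\}$, and $\langle S\rangle$ denotes the subgroup of $G$ generated by $S$. *)

theory Defs
  imports Main
begin

text \<open>Balanced set (nonempty, as implicit in the paper): every element b has
  distinct b1, b2 in B with 2b = b1 + b2.\<close>
definition balanced :: "'a::ab_group_add set \<Rightarrow> bool" where
  "balanced B \<longleftrightarrow> B \<noteq> {} \<and>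
     (\<forall>b\<in>B. \<exists>b1\<in>B. \<exists>b2\<in>B. b1 \<noteq> b2 \<and> b + b = b1 + b2)"

definition irreducible_balanced :: "'a::ab_group_add set \<Rightarrow> bool" where
  "irreducible_balanced B \<longleftrightarrow> balanced B \<and>
     \<not> (\<exists>B1 B2. B1 \<subseteq> B \<and> B2 \<subseteq> B \<and> B1 \<inter> B2 = {} \<and> balanced B1 \<and> balanced B2)"

definition subset_sums :: "'a::comm_monoid_add set \<Rightarrow> 'a set" where
  "subset_sums S = {sum (\<lambda>s. s) S' | S'. S' \<subseteq> S}"

definition gen_subgroup :: "'a::ab_group_add set \<Rightarrow> 'a set" where
  "gen_subgroup S = \<Inter>{H. 0 \<in> H \<and> (\<forall>x\<in>H. \<forall>y\<in>H. x + y \<in> H) \<and> (\<forall>x\<in>H. - x \<in> H) \<and> S \<subseteq> H}"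

end

theory Submission
  imports Defs "HOL-Library.Multiset"
begin

text \<open>Write \<open>x \<rightarrow> y\<close> when \<open>2x = y + z\<close> for some \<open>z \<noteq> y\<close> in \<open>B\<close>, so that \<open>B\<close> is balanced
  iff every element has two distinct successors. Irreducibility forces a sink \<open>b\<close> reachable
  from every element. After translating by \<open>-b\<close> every element reaches \<open>0\<close>, and a potential
  decreasing along these paths lets us rewrite any multiset sum over \<open>B - b\<close> (replacing
  \<open>c + c\<close> by \<open>y + z\<close>) until no nonzero element repeats, i.e. into a subset sum. In a finite
  group the multiset sums form the generated subgroup.\<close>

definition balance_step :: "'a::ab_group_add set \<Rightarrow> ('a \<times> 'a) set" where
  "balance_step S = {(x, y). x \<in> S \<and> y \<in> S \<and> (\<exists>z\<in>S. y \<noteq> z \<and> x + x = y + z)}"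

lemma balance_step_rtrancl_mem:
  assumes "(x, y) \<in> (balance_step S)\<^sup>*" "x \<in> S"
  shows "y \<in> S"
  using assms by (induction rule: rtrancl_induct) (auto simp: balance_step_def)

lemma balance_step_translate:
  fixes g :: "'a::ab_group_add"
  assumes "(x, y) \<in> balance_step B"
  shows "(x + g, y + g) \<in> balance_step ((\<lambda>b. b + g) ` B)"
proof -
  from assms obtain z where "x \<in> B" "y \<in> B" "z \<in> B" "y \<noteq> z" "x + x = y + z"
    by (auto simp: balance_step_def)
  then have "z + g \<in> (\<lambda>b. b + g) ` B \<and> y + g \<noteq> z + g \<and> (x + g) + (x + g) = (y + g) + (z + g)"
    by (auto simp: algebra_simps)
  with \<open>x \<in> B\<close> \<open>y \<in> B\<close> show ?thesis
    unfolding balance_step_def by blast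
qed

lemma balance_step_rtrancl_translate:
  fixes g :: "'a::ab_group_add"
  assumes "(x, y) \<in> (balance_step B)\<^sup>*"
  shows "(x + g, y + g) \<in> (balance_step ((\<lambda>b. b + g) ` B))\<^sup>*"
  using assms
  by (induction rule: rtrancl_induct) (auto intro: rtrancl_into_rtrancl balance_step_translate)

lemma balanced_if_balance_step_closed:
  assumes "balanced B" "T \<subseteq> B" "T \<noteq> {}"
    and closed: "\<And>t u. t \<in> T \<Longrightarrow> (t, u) \<in> balance_step B \<Longrightarrow> u \<in> T"
  shows "balanced T"
  unfolding balanced_def
proof (intro conjI ballI)
  fix t assume "t \<in> T"
  with assms(1,2) obtain t1 t2 where t12: "t1 \<in> B" "t2 \<in> B" "t1 \<noteq> t2" "t + t = t1 + t2"
    unfolding balanced_def by blast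
  with \<open>t \<in> T\<close> \<open>T \<subseteq> B\<close> have "(t, t1) \<in> balance_step B" "(t, t2) \<in> balance_step B"
    unfolding balance_step_def by (auto simp: add.commute)
  with closed \<open>t \<in> T\<close> have "t1 \<in> T" "t2 \<in> T" by auto
  with t12 show "\<exists>b1\<in>T. \<exists>b2\<in>T. b1 \<noteq> b2 \<and> t + t = b1 + b2" by blast
qed fact

text \<open>The forward closure \<open>T\<close> of least size is a minimal closed set, so all of \<open>T\<close> reaches
  back to its root \<open>b\<close>; the elements not reaching \<open>b\<close> form a closed set disjoint from \<open>T\<close>.\<close>

lemma irreducible_balanced_ex_sink:
  fixes B :: "'a::ab_group_add set"
  assumes "finite B" and irr: "irreducible_balanced B"
  shows "\<exists>b\<in>B. \<forall>c\<in>B. (c, b) \<in> (balance_step B)\<^sup>*"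
proof -
  let ?R = "(balance_step B)\<^sup>*"
  have bal: "balanced B" using irr by (simp add: irreducible_balanced_def)
  then obtain b0 where "b0 \<in> B" by (auto simp: balanced_def)
  then obtain b where "b \<in> B" and least: "\<And>c. c \<in> B \<Longrightarrow> card (?R `` {b}) \<le> card (?R `` {c})"
    using ex_has_least_nat[of "\<lambda>c. c \<in> B" b0 "\<lambda>c. card (?R `` {c})"] by blast
  define T where "T = ?R `` {b}"
  have "T \<subseteq> B" using \<open>b \<in> B\<close> balance_step_rtrancl_mem by (auto simp: T_def)
  have reaches_root: "(t, b) \<in> ?R" if "t \<in> T" for t
  proof -
    have "?R `` {t} \<subseteq> T" using that by (auto simp: T_def intro: rtrancl_trans)
    moreover have "card T \<le> card (?R `` {t})" using least that \<open>T \<subseteq> B\<close> by (auto simp: T_def)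
    ultimately have "?R `` {t} = T"
      using \<open>finite B\<close> \<open>T \<subseteq> B\<close> by (metis card_seteq finite_subset)
    then have "b \<in> ?R `` {t}" by (simp add: T_def)
    then show ?thesis by simp
  qed
  have "balanced T"
    using bal \<open>T \<subseteq> B\<close>
  proof (rule balanced_if_balance_step_closed)
    show "T \<noteq> {}" by (auto simp: T_def)
    fix t u assume "t \<in> T" "(t, u) \<in> balance_step B"
    then show "u \<in> T" unfolding T_def by (blast intro: rtrancl_into_rtrancl)
  qed
  define U where "U = {c \<in> B. (c, b) \<notin> ?R}"
  have "U \<subseteq> B" by (auto simp: U_def)
  have "U = {}"
  proof (rule ccontr)
    assume "U \<noteq> {}"
    have "balanced U"
      using bal _ \<open>U \<noteq> {}\<close>
    proof (rule balanced_if_balance_step_closed)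
      fix t u assume "t \<in> U" and step: "(t, u) \<in> balance_step B"
      moreover from step have "u \<in> B" by (auto simp: balance_step_def)
      ultimately show "u \<in> U"
        unfolding U_def by (blast intro: converse_rtrancl_into_rtrancl)
    qed fact
    moreover have "U \<inter> T = {}" using reaches_root by (auto simp: U_def)
    ultimately show False
      using irr \<open>balanced T\<close> \<open>T \<subseteq> B\<close> \<open>U \<subseteq> B\<close> unfolding irreducible_balanced_def by blast
  qed
  with \<open>b \<in> B\<close> show ?thesis by (auto simp: U_def)
qed

definition splitting_potential :: "'a::ab_group_add set \<Rightarrow> ('a \<Rightarrow> nat) \<Rightarrow> bool" where
  "splitting_potential A w \<longleftrightarrow> w 0 = 0 \<and>
     (\<forall>c\<in>A. c \<noteq> 0 \<longrightarrow> (\<exists>y\<in>A. \<exists>z\<in>A. c + c = y + z \<and> w y + w z < 2 * w c))"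

text \<open>With \<open>d\<close> the number of steps to \<open>0\<close> and \<open>D\<close> its maximum, take \<open>w = 2^D - 2^(D - d)\<close>.
  Splitting \<open>c\<close> along a shortest path to \<open>0\<close> gives \<open>w y \<le> 2 w c - 2^D\<close>, while \<open>w z < 2^D\<close>.\<close>

lemma splitting_potential_exists:
  fixes A :: "'a::ab_group_add set"
  assumes "finite A" and reach: "\<forall>c\<in>A. (c, 0) \<in> (balance_step A)\<^sup>*"
  shows "\<exists>w. splitting_potential A w"
proof -
  let ?R = "balance_step A"
  define d where "d c = (LEAST n. (c, 0) \<in> ?R ^^ n)" for c
  have d_path: "(c, 0) \<in> ?R ^^ d c" if "c \<in> A" for c
    using reach that unfolding d_def rtrancl_power by (metis LeastI)
  have d_le: "d c \<le> n" if "(c, 0) \<in> ?R ^^ n" for c n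
    unfolding d_def using that by (rule Least_le)
  define D where "D = Max (d ` A)"
  have d_le_D: "d c \<le> D" if "c \<in> A" for c
    unfolding D_def using \<open>finite A\<close> that by simp
  define w :: "'a \<Rightarrow> nat" where "w x = 2 ^ D - 2 ^ (D - d x)" for x
  have "w 0 = 0" using d_le[of 0 0] by (simp add: w_def)
  moreover have "\<exists>y\<in>A. \<exists>z\<in>A. c + c = y + z \<and> w y + w z < 2 * w c"
    if "c \<in> A" "c \<noteq> 0" for c
  proof -
    obtain n where dn: "d c = Suc n"
      using d_path[OF \<open>c \<in> A\<close>] \<open>c \<noteq> 0\<close> by (cases "d c") auto
    then obtain y where "(c, y) \<in> ?R" "(y, 0) \<in> ?R ^^ n"
      using relpow_Suc_D2 d_path[OF \<open>c \<in> A\<close>] by metis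
    then obtain z where yz: "y \<in> A" "z \<in> A" "c + c = y + z"
      unfolding balance_step_def by auto
    have "d y \<le> n" by (rule d_le) fact
    have "Suc n \<le> D" using d_le_D[OF \<open>c \<in> A\<close>] dn by simp
    have "2 * 2 ^ (D - d c) \<le> (2::nat) ^ (D - d y)"
      using \<open>d y \<le> n\<close> \<open>Suc n \<le> D\<close> dn by (simp flip: power_Suc)
    moreover have "(2::nat) ^ (D - x) \<le> 2 ^ D" for x by (rule power_increasing) auto
    moreover have "(a - Y) + (a - Z) < 2 * (a - p)"
      if "2 * p \<le> Y" "Y \<le> a" "1 \<le> Z" "Z \<le> a" for a Y Z p :: nat
      using that by arith
    ultimately have "w y + w z < 2 * w c"
      unfolding w_def by (metis one_le_numeral one_le_power)
    with yz show ?thesis by blast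
  qed
  ultimately show ?thesis unfolding splitting_potential_def by blast
qed

lemma sum_mset_eq_sum_set_mset:
  fixes M :: "'a::comm_monoid_add multiset"
  assumes "\<And>x. count M x \<le> 1"
  shows "sum_mset M = \<Sum>(set_mset M)"
proof -
  have "M = mset_set (set_mset M)"
  proof (rule multiset_eqI)
    fix x
    show "count M x = count (mset_set (set_mset M)) x"
      using assms[of x] by (cases "x \<in># M") (auto simp: count_eq_zero_iff le_Suc_eq)
  qed
  then show ?thesis by (metis image_mset_cong image_mset_id id_apply sum_unfold_sum_mset)
qed

lemma sum_mset_filter_nonzero:
  fixes M :: "'a::comm_monoid_add multiset"
  shows "sum_mset M = sum_mset (filter_mset (\<lambda>x. x \<noteq> 0) M)"
proof -
  have "sum_mset M = sum_mset (filter_mset (\<lambda>x. x \<noteq> 0) M) + sum_mset (filter_mset (\<lambda>x. \<not> x \<noteq> 0) M)"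
    by (subst multiset_partition[of M "\<lambda>x. x \<noteq> 0"]) (rule sum_mset.union)
  also have "sum_mset (filter_mset (\<lambda>x. \<not> x \<noteq> 0) M) = 0" by (rule sum_mset.neutral) auto
  finally show ?thesis by simp
qed

lemma sum_mset_mem_subset_sums:
  fixes A :: "'a::ab_group_add set"
  assumes "splitting_potential A w" "set_mset M \<subseteq> A"
  shows "sum_mset M \<in> subset_sums A"
  using assms(2)
proof (induction "sum_mset (image_mset w M)" arbitrary: M rule: less_induct)
  case (less M)
  show ?case
  proof (cases "\<exists>c. c \<noteq> 0 \<and> 2 \<le> count M c")
    case True
    then obtain c where "c \<noteq> 0" "2 \<le> count M c" by blast
    then have "c \<in># M" by (intro count_inI) simp
    with less.prems have "c \<in> A" by auto
    with \<open>c \<noteq> 0\<close> assms(1) obtain y z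
      where yz: "y \<in> A" "z \<in> A" "c + c = y + z" "w y + w z < 2 * w c"
      unfolding splitting_potential_def by blast
    have "{#c, c#} \<subseteq># M" using \<open>2 \<le> count M c\<close> by (simp add: subseteq_mset_def)
    define M' where "M' = M - {#c, c#}"
    have M: "M = M' + {#c, c#}" using \<open>{#c, c#} \<subseteq># M\<close> by (metis M'_def subset_mset.diff_add)
    define N where "N = M' + {#y, z#}"
    have "sum_mset N = sum_mset M" using M yz(3) by (simp add: N_def add.assoc)
    moreover have "sum_mset (image_mset w N) < sum_mset (image_mset w M)"
      using M yz(4) by (simp add: N_def)
    moreover have "set_mset N \<subseteq> A" using less.prems yz(1,2) M by (auto simp: N_def)
    ultimately show ?thesis using less.hyps[of N] by simp
  next
    case False
    define M' where "M' = filter_mset (\<lambda>x. x \<noteq> 0) M"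
    have "sum_mset M = sum_mset M'"
      unfolding M'_def by (rule sum_mset_filter_nonzero)
    also have "\<dots> = \<Sum>(set_mset M')"
      using False by (intro sum_mset_eq_sum_set_mset) (auto simp: M'_def not_le)
    finally show ?thesis
      using less.prems unfolding subset_sums_def M'_def by auto
  qed
qed

lemma sum_mem_if_add_closed:
  assumes "0 \<in> H" "\<And>x y. x \<in> H \<Longrightarrow> y \<in> H \<Longrightarrow> x + y \<in> H" "S \<subseteq> H"
  shows "\<Sum>S \<in> H"
  using assms(3) by (induction S rule: infinite_finite_induct) (auto simp: assms(1,2))

lemma subset_sums_subset_gen_subgroup: "subset_sums A \<subseteq> gen_subgroup A"
proof
  fix x assume "x \<in> subset_sums A"
  then obtain S where "x = \<Sum>S" "S \<subseteq> A" unfolding subset_sums_def by blast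
  then show "x \<in> gen_subgroup A"
    unfolding gen_subgroup_def by (auto intro!: sum_mem_if_add_closed)
qed

lemma gen_subgroup_least:
  assumes "0 \<in> H" "\<forall>x\<in>H. \<forall>y\<in>H. x + y \<in> H" "\<forall>x\<in>H. - x \<in> H" "A \<subseteq> H"
  shows "gen_subgroup A \<subseteq> H"
  unfolding gen_subgroup_def using assms by (intro Inter_lower) blast

lemma uminus_mem_if_finite_add_closed:
  fixes H :: "'a::ab_group_add set"
  assumes "finite H" "0 \<in> H" "\<forall>x\<in>H. \<forall>y\<in>H. x + y \<in> H" "x \<in> H"
  shows "- x \<in> H"
proof -
  have "(\<lambda>y. x + y) ` H = H"
    using assms by (intro endo_inj_surj) (auto simp: inj_on_def)
  with \<open>0 \<in> H\<close> obtain y where "y \<in> H" "x + y = 0" by (metis imageE)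
  moreover have "- x = y" using \<open>x + y = 0\<close> by (simp add: neg_eq_iff_add_eq_0)
  ultimately show ?thesis by simp
qed

lemma gen_subgroup_subset_sum_msets:
  fixes A :: "'a::{ab_group_add, finite} set"
  shows "gen_subgroup A \<subseteq> {sum_mset M | M. set_mset M \<subseteq> A}"
    (is "_ \<subseteq> ?S")
proof (rule gen_subgroup_least)
  show "0 \<in> ?S" by (intro CollectI exI[of _ "{#}"]) simp
  show add: "\<forall>x\<in>?S. \<forall>y\<in>?S. x + y \<in> ?S"
  proof (intro ballI)
    fix x y assume "x \<in> ?S" "y \<in> ?S"
    then obtain M N where "x = sum_mset M" "y = sum_mset N" "set_mset (M + N) \<subseteq> A" by auto
    then show "x + y \<in> ?S" by (intro CollectI exI[of _ "M + N"]) simp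
  qed
  show "A \<subseteq> ?S"
  proof
    fix a assume "a \<in> A"
    then show "a \<in> ?S" by (intro CollectI exI[of _ "{#a#}"]) simp
  qed
  show "\<forall>x\<in>?S. - x \<in> ?S"
    using uminus_mem_if_finite_add_closed[OF finite \<open>0 \<in> ?S\<close> add] by blast
qed

lemma subset_sums_eq_gen_subgroup_if_reach_zero:
  fixes A :: "'a::{ab_group_add, finite} set"
  assumes "\<forall>c\<in>A. (c, 0) \<in> (balance_step A)\<^sup>*"
  shows "subset_sums A = gen_subgroup A"
proof
  obtain w where "splitting_potential A w"
    using splitting_potential_exists[OF finite assms] by blast
  then show "gen_subgroup A \<subseteq> subset_sums A"
    using gen_subgroup_subset_sum_msets sum_mset_mem_subset_sums by blast
qed (rule subset_sums_subset_gen_subgroup)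

theorem proposition4p6:
  fixes B :: "'a::{ab_group_add, finite} set"
  assumes "irreducible_balanced B"
  shows "\<exists>g \<in> uminus ` B. subset_sums ((\<lambda>b. b + g) ` B) = gen_subgroup ((\<lambda>b. b + g) ` B)"
proof -
  obtain b where "b \<in> B" and sink: "\<forall>c\<in>B. (c, b) \<in> (balance_step B)\<^sup>*"
    using irreducible_balanced_ex_sink[OF finite assms] by blast
  let ?A = "(\<lambda>c. c + - b) ` B"
  have "\<forall>a\<in>?A. (a, 0) \<in> (balance_step ?A)\<^sup>*"
    using sink balance_step_rtrancl_translate[of _ b B "- b"] by fastforce
  then have "subset_sums ?A = gen_subgroup ?A"
    by (rule subset_sums_eq_gen_subgroup_if_reach_zero)
  with \<open>b \<in> B\<close> show ?thesis by blast
qed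

end
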